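(* Let $n\ge2$, let $A$ be an $n\times n$ matrix with strictly positive entries, let $p:=\sqrt{R(A)}$, and define for $h\ge0$ \[ \Theta(h)=2\log\!\left(\frac{1+p\,e^{h/2}}{p+e^{h/2}}\right). \] Then for all $x,y\in\mathbb{R}^n_{>0}$, $d_H(Ax,Ay)\le\Theta(d_H(x,y))$. Moreover, if $p>1$, then $\Theta$ is increasing and concave on $[0,\infty)$, $\Theta(0)=0$, $\Theta'(0)=\kappa(A):=\frac{p-1}{p+1}$, $\lim_{h\to\infty}\Theta(h)=\log R(A)$, and $\Theta(h)\le\kappa(A)h$ for all $h\ge0$; consequently $d_H(Ax,Ay)\le\kappa(A)\,d_H(x,y)$ for all $x,y\in\mathbb{R}^n_{>0}$.
   Context: For a matrix $A=(a_{ik})$ with strictly positive entries, its distortion is $R(A)=\max_{i,j,k,\ell}\frac{a_{ik}a_{j\ell}}{a_{i\ell}a_{jk}}$. For $x,y\in\mathbb{R}^n_{>0}$, $\mathrm{Dist}(x,y)=\max_{i,j}\frac{y_ix_j}{y_jx_i}$ and the Hilbert metric is $d_H(x,y)=\log\mathrm{Dist}(x,y)$. *)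

theory Defs
  imports "HOL-Analysis.Analysis"
begin

definition distortion :: "real ^ 'n ^ 'm \<Rightarrow> real" where
  "distortion A = Max {(A $ i $ k * A $ j $ l) / (A $ i $ l * A $ j $ k) | i j k l. True}"

definition Dist :: "real ^ 'n \<Rightarrow> real ^ 'n \<Rightarrow> real" where
  "Dist x y = Max {(y $ i * x $ j) / (y $ j * x $ i) | i j. True}"

definition hilbert_dist :: "real ^ 'n \<Rightarrow> real ^ 'n \<Rightarrow> real" where
  "hilbert_dist x y = ln (Dist x y)"

definition Theta :: "real \<Rightarrow> real \<Rightarrow> real" where
  "Theta p h = 2 * ln ((1 + p * exp (h / 2)) / (p + exp (h / 2)))"

definition kappa :: "real ^ 'n ^ 'm \<Rightarrow> real" where
  "kappa A = (sqrt (distortion A) - 1) / (sqrt (distortion A) + 1)"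

end

theory Submission
  imports Defs "HOL-Real_Asymp.Real_Asymp"
begin

text \<open>
  Fix rows \<open>i, j\<close> of \<open>A\<close>. With weights \<open>v\<^sub>k = A\<^sub>j\<^sub>k x\<^sub>k\<close>, the cross ratio
  \<open>(Ay)\<^sub>i (Ax)\<^sub>j / ((Ay)\<^sub>j (Ax)\<^sub>i)\<close> equals \<open>(\<Sum> v c t)(\<Sum> v) / ((\<Sum> v t)(\<Sum> v c))\<close> where
  \<open>c\<^sub>k = A\<^sub>i\<^sub>k / A\<^sub>j\<^sub>k\<close> ranges in an interval of ratio at most \<open>p\<^sup>2 = R(A)\<close> and \<open>t\<^sub>k = y\<^sub>k / x\<^sub>k\<close> in
  one of ratio at most \<open>s\<^sup>2 = Dist(x,y)\<close>. An elementary quadratic inequality bounds such a ratio by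
  \<open>((1 + p s) / (p + s))\<^sup>2\<close>, whose logarithm is exactly \<open>\<Theta>(d\<^sub>H(x,y))\<close>. The analytic properties of
  \<open>\<Theta>\<close> follow from its derivative \<open>(p\<^sup>2 - 1) e / ((p + e)(1 + p e))\<close>, \<open>e = exp (h/2)\<close>,
  which is decreasing for \<open>h \<ge> 0\<close> and equals \<open>\<kappa>(A)\<close> at \<open>0\<close>.
\<close>

lemma finite_values2: "finite {f i j | (i::'a::finite) (j::'a). True}"
proof -
  have "{f i j | i j. True} = (\<lambda>(i,j). f i j) ` UNIV" by auto
  then show ?thesis by simp
qed

lemma finite_values4:
  "finite {f i j k l | (i::'a::finite) (j::'a) (k::'b::finite) (l::'b). True}"
proof -
  have "{f i j k l | i j k l. True} = (\<lambda>(i,j,k,l). f i j k l) ` UNIV"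
    by (auto simp: image_iff) blast
  then show ?thesis by simp
qed

lemma distortion_ge:
  fixes A :: "real ^ 'n ^ 'm"
  shows "(A $ i $ k * A $ j $ l) / (A $ i $ l * A $ j $ k) \<le> distortion A"
  unfolding distortion_def by (rule Max_ge[OF finite_values4]) blast

lemma distortion_ge_1:
  fixes A :: "real ^ 'n ^ 'm"
  assumes "\<And>i k. A $ i $ k > 0"
  shows "distortion A \<ge> 1"
proof -
  fix i :: 'm and k :: 'n
  show ?thesis using distortion_ge[of A i k i k] assms[of i k] by simp
qed

lemma Dist_ge:
  fixes x y :: "real ^ 'n"
  shows "(y $ i * x $ j) / (y $ j * x $ i) \<le> Dist x y"
  unfolding Dist_def by (rule Max_ge[OF finite_values2]) blast

lemma Dist_le:
  fixes x y :: "real ^ 'n"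
  assumes "\<And>i j. (y $ i * x $ j) / (y $ j * x $ i) \<le> K"
  shows "Dist x y \<le> K"
  unfolding Dist_def using assms by (subst Max_le_iff[OF finite_values2]) auto

lemma Dist_ge_1:
  fixes x y :: "real ^ 'n"
  assumes "\<forall>i. x $ i > 0" "\<forall>i. y $ i > 0"
  shows "Dist x y \<ge> 1"
proof -
  fix i :: 'n
  show ?thesis using Dist_ge[of y i x i] assms(1)[rule_format, of i] assms(2)[rule_format, of i]
    by simp
qed

lemma row_ratio_le_distortion:
  fixes A :: "real ^ 'n ^ 'm"
  assumes "\<And>i k. A $ i $ k > 0"
  shows "A $ i $ k / A $ j $ k \<le> distortion A * (A $ i $ l / A $ j $ l)"
proof -
  have "(A $ i $ k / A $ j $ k) / (A $ i $ l / A $ j $ l) = (A $ i $ k * A $ j $ l) / (A $ i $ l * A $ j $ k)"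
    using assms[of j k] assms[of j l] by (simp add: field_simps)
  also have "\<dots> \<le> distortion A" by (rule distortion_ge)
  finally have "(A $ i $ k / A $ j $ k) / (A $ i $ l / A $ j $ l) \<le> distortion A" .
  moreover have "A $ i $ l / A $ j $ l > 0" using assms by simp
  ultimately show ?thesis by (metis pos_divide_le_eq)
qed

lemma coordinate_ratio_le_Dist:
  fixes x y :: "real ^ 'n"
  assumes "\<forall>i. x $ i > 0" "\<forall>i. y $ i > 0"
  shows "y $ k / x $ k \<le> Dist x y * (y $ l / x $ l)"
proof -
  have "(y $ k / x $ k) / (y $ l / x $ l) = (y $ k * x $ l) / (y $ l * x $ k)"
    using assms by (simp add: field_simps)
  also have "\<dots> \<le> Dist x y" by (rule Dist_ge)
  finally have "(y $ k / x $ k) / (y $ l / x $ l) \<le> Dist x y" .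
  moreover have "y $ l / x $ l > 0" using assms by simp
  ultimately show ?thesis by (metis pos_divide_le_eq)
qed

lemma hilbert_dist_nonneg:
  fixes x y :: "real ^ 'n"
  assumes "\<forall>i. x $ i > 0" "\<forall>i. y $ i > 0"
  shows "hilbert_dist x y \<ge> 0"
  unfolding hilbert_dist_def using Dist_ge_1[OF assms] by simp

lemma matrix_vector_mult_pos:
  fixes A :: "real ^ 'n ^ 'm" and x :: "real ^ 'n"
  assumes "\<And>i k. A $ i $ k > 0" and "\<forall>i. x $ i > 0"
  shows "\<forall>i. (A *v x) $ i > 0"
  unfolding matrix_vector_mult_def using assms by (auto intro!: sum_pos)

lemma finite_range_has_min:
  fixes f :: "'n::finite \<Rightarrow> real"
  obtains k0 where "\<And>k. f k0 \<le> f k"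
  using ex_min_if_finite[of "range f"] by (auto simp: not_less)

section \<open>The quadratic inequality behind the contraction\<close>

text \<open>
  The defect \<open>H T\<close> of the inequality (with \<open>X\<close> replaced by its bound \<open>(q\<^sup>2 - 1) C\<close>) is affine
  and nondecreasing in \<open>T\<close>, and at the smallest admissible value \<open>T\<^sub>0 = (q\<^sup>2 - 1) C / (p\<^sup>2 - 1)\<close>
  it is a perfect square.
\<close>

lemma cross_ratio_quadratic_ineq_ordered:
  fixes V C T X p q :: real
  assumes p: "p \<ge> 1" and q: "q \<ge> 1" and V: "V > 0" and C: "C \<ge> 0" and T: "T \<ge> 0"
    and X: "X \<le> (q\<^sup>2 - 1) * C" and ord: "(q\<^sup>2 - 1) * C \<le> (p\<^sup>2 - 1) * T"
  shows "(p + q)\<^sup>2 * (V * (V + C + T + X)) \<le> (1 + p * q)\<^sup>2 * ((V + T) * (V + C))"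
proof (cases "p = 1")
  case True
  then have "V * X \<le> 0" using X ord V by (simp add: mult_nonneg_nonpos)
  moreover have "0 \<le> T * C" using T C by simp
  moreover have "(V + T) * (V + C) - V * (V + C + T + X) = T * C - V * X"
    by (simp add: algebra_simps)
  ultimately have "V * (V + C + T + X) \<le> (V + T) * (V + C)" by linarith
  then show ?thesis using True by (simp add: mult_left_mono)
next
  case False
  have P: "p\<^sup>2 - 1 > 0" using False p one_less_power[of p 2] by simp
  have Q: "q\<^sup>2 - 1 \<ge> 0" using q by simp
  define u where "u = C / ((p\<^sup>2 - 1) * V)"
  have Cu: "C = (p\<^sup>2 - 1) * u * V" using P V unfolding u_def by (simp add: field_simps)
  define T0 where "T0 = (q\<^sup>2 - 1) * u * V"
  have "(p\<^sup>2 - 1) * T0 \<le> (p\<^sup>2 - 1) * T"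
    using ord unfolding T0_def Cu by (simp add: ac_simps)
  then have T0_le: "T0 \<le> T" using P by simp
  define H where "H t = (1 + p*q)\<^sup>2 * ((V + t) * (V + C)) - (p + q)\<^sup>2 * (V * (V + q\<^sup>2 * C + t))"
    for t
  have "H T0 = V\<^sup>2 * (p\<^sup>2 - 1) * (q\<^sup>2 - 1) * ((1 + p*q) * u - 1)\<^sup>2"
    unfolding H_def T0_def Cu by (simp add: power2_eq_square algebra_simps)
  then have H_T0: "H T0 \<ge> 0" using P Q by simp
  have "(1 + p*q)\<^sup>2 - (p + q)\<^sup>2 = (p\<^sup>2 - 1) * (q\<^sup>2 - 1)"
    by (simp add: power2_eq_square algebra_simps)
  moreover have "(p\<^sup>2 - 1) * (q\<^sup>2 - 1) \<ge> 0" using P Q by simp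
  ultimately have "((1 + p*q)\<^sup>2 - (p + q)\<^sup>2) * V + (1 + p*q)\<^sup>2 * C \<ge> 0"
    using V C by simp
  then have slope: "(1 + p*q)\<^sup>2 * (V + C) - (p + q)\<^sup>2 * V \<ge> 0" by (simp add: algebra_simps)
  have "H T - H T0 = ((1 + p*q)\<^sup>2 * (V + C) - (p + q)\<^sup>2 * V) * (T - T0)"
    unfolding H_def by (simp add: algebra_simps)
  also have "\<dots> \<ge> 0" using slope T0_le by simp
  finally have "H T \<ge> 0" using H_T0 by linarith
  moreover have "(p + q)\<^sup>2 * (V * (V + C + T + X)) \<le> (p + q)\<^sup>2 * (V * (V + q\<^sup>2 * C + T))"
    using X V by (intro mult_left_mono) (auto simp: algebra_simps)
  ultimately show ?thesis unfolding H_def by linarith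
qed

lemma cross_ratio_quadratic_ineq:
  fixes V C T X p q :: real
  assumes p: "p \<ge> 1" and q: "q \<ge> 1" and V: "V > 0" and C: "C \<ge> 0" and T: "T \<ge> 0"
    and XC: "X \<le> (q\<^sup>2 - 1) * C" and XT: "X \<le> (p\<^sup>2 - 1) * T"
  shows "(p + q)\<^sup>2 * (V * (V + C + T + X)) \<le> (1 + p * q)\<^sup>2 * ((V + T) * (V + C))"
proof (cases "(q\<^sup>2 - 1) * C \<le> (p\<^sup>2 - 1) * T")
  case True
  then show ?thesis using cross_ratio_quadratic_ineq_ordered[OF p q V C T XC] by blast
next
  case False
  then have "(q + p)\<^sup>2 * (V * (V + T + C + X)) \<le> (1 + q * p)\<^sup>2 * ((V + C) * (V + T))"
    using cross_ratio_quadratic_ineq_ordered[OF q p V T C XT] by linarith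
  then show ?thesis by (simp add: algebra_simps)
qed

lemma weighted_cross_ratio_le_normalized:
  fixes v \<gamma> \<tau> :: "'a \<Rightarrow> real" and p q :: real
  assumes fin: "finite I" and ne: "I \<noteq> {}" and v: "\<And>k. k \<in> I \<Longrightarrow> v k > 0"
    and p: "p \<ge> 1" and q: "q \<ge> 1"
    and \<gamma>: "\<And>k. k \<in> I \<Longrightarrow> 0 \<le> \<gamma> k \<and> \<gamma> k \<le> p\<^sup>2 - 1"
    and \<tau>: "\<And>k. k \<in> I \<Longrightarrow> 0 \<le> \<tau> k \<and> \<tau> k \<le> q\<^sup>2 - 1"
  shows "(p + q)\<^sup>2 * ((\<Sum>k\<in>I. v k * (1 + \<gamma> k) * (1 + \<tau> k)) * (\<Sum>k\<in>I. v k))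
     \<le> (1 + p * q)\<^sup>2 * ((\<Sum>k\<in>I. v k * (1 + \<tau> k)) * (\<Sum>k\<in>I. v k * (1 + \<gamma> k)))"
proof -
  define V where "V = (\<Sum>k\<in>I. v k)"
  define C where "C = (\<Sum>k\<in>I. v k * \<gamma> k)"
  define T where "T = (\<Sum>k\<in>I. v k * \<tau> k)"
  define X where "X = (\<Sum>k\<in>I. v k * \<gamma> k * \<tau> k)"
  have "V > 0" unfolding V_def using fin ne v by (intro sum_pos) auto
  moreover have "C \<ge> 0" unfolding C_def using v \<gamma> by (intro sum_nonneg) (simp add: less_imp_le)
  moreover have "T \<ge> 0" unfolding T_def using v \<tau> by (intro sum_nonneg) (simp add: less_imp_le)
  moreover have "X \<le> (q\<^sup>2 - 1) * C"
    unfolding X_def C_def sum_distrib_left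
  proof (rule sum_mono)
    fix k assume k: "k \<in> I"
    have "0 \<le> v k * \<gamma> k" using v[OF k] \<gamma>[OF k] by simp
    from mult_left_mono[OF conjunct2[OF \<tau>[OF k]] this]
    show "v k * \<gamma> k * \<tau> k \<le> (q\<^sup>2 - 1) * (v k * \<gamma> k)" by (simp add: algebra_simps)
  qed
  moreover have "X \<le> (p\<^sup>2 - 1) * T"
    unfolding X_def T_def sum_distrib_left
  proof (rule sum_mono)
    fix k assume k: "k \<in> I"
    have "0 \<le> v k * \<tau> k" using v[OF k] \<tau>[OF k] by simp
    from mult_left_mono[OF conjunct2[OF \<gamma>[OF k]] this]
    show "v k * \<gamma> k * \<tau> k \<le> (p\<^sup>2 - 1) * (v k * \<tau> k)" by (simp add: algebra_simps)
  qed
  ultimately have "(p + q)\<^sup>2 * (V * (V + C + T + X)) \<le> (1 + p * q)\<^sup>2 * ((V + T) * (V + C))"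
    using cross_ratio_quadratic_ineq[OF p q] by blast
  moreover have "(\<Sum>k\<in>I. v k * (1 + \<gamma> k) * (1 + \<tau> k)) = V + C + T + X"
    "(\<Sum>k\<in>I. v k * (1 + \<tau> k)) = V + T" "(\<Sum>k\<in>I. v k * (1 + \<gamma> k)) = V + C"
    unfolding V_def C_def T_def X_def by (simp_all add: sum.distrib algebra_simps)
  ultimately show ?thesis by (simp add: V_def ac_simps)
qed

lemma weighted_cross_ratio_le:
  fixes v c t :: "'a \<Rightarrow> real" and p q a b :: real
  assumes fin: "finite I" and ne: "I \<noteq> {}" and v: "\<And>k. k \<in> I \<Longrightarrow> v k > 0"
    and p: "p \<ge> 1" and q: "q \<ge> 1" and a: "a > 0" and b: "b > 0"
    and c_ge: "\<And>k. k \<in> I \<Longrightarrow> a \<le> c k" and c_le: "\<And>k. k \<in> I \<Longrightarrow> c k \<le> p\<^sup>2 * a"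
    and t_ge: "\<And>k. k \<in> I \<Longrightarrow> b \<le> t k" and t_le: "\<And>k. k \<in> I \<Longrightarrow> t k \<le> q\<^sup>2 * b"
  shows "(p + q)\<^sup>2 * ((\<Sum>k\<in>I. v k * c k * t k) * (\<Sum>k\<in>I. v k))
     \<le> (1 + p * q)\<^sup>2 * ((\<Sum>k\<in>I. v k * t k) * (\<Sum>k\<in>I. v k * c k))"
proof -
  define \<gamma> where "\<gamma> k = c k / a - 1" for k
  define \<tau> where "\<tau> k = t k / b - 1" for k
  have c: "c k = a * (1 + \<gamma> k)" and t: "t k = b * (1 + \<tau> k)" for k
    using a b by (simp_all add: \<gamma>_def \<tau>_def)
  have "0 \<le> \<gamma> k \<and> \<gamma> k \<le> p\<^sup>2 - 1" "0 \<le> \<tau> k \<and> \<tau> k \<le> q\<^sup>2 - 1" if "k \<in> I" for k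
    using c_ge[OF that] c_le[OF that] t_ge[OF that] t_le[OF that] a b
    by (simp_all add: \<gamma>_def \<tau>_def field_simps)
  then have "(a * b) * ((p + q)\<^sup>2 * ((\<Sum>k\<in>I. v k * (1 + \<gamma> k) * (1 + \<tau> k)) * (\<Sum>k\<in>I. v k)))
      \<le> (a * b) * ((1 + p * q)\<^sup>2 * ((\<Sum>k\<in>I. v k * (1 + \<tau> k)) * (\<Sum>k\<in>I. v k * (1 + \<gamma> k))))"
    using weighted_cross_ratio_le_normalized[OF fin ne v p q] a b by simp
  then show ?thesis
    unfolding c t by (simp add: sum_distrib_left[symmetric] ac_simps)
qed

section \<open>The contraction bound for the Hilbert metric\<close>

lemma Dist_matrix_vector_mult_le:
  fixes A :: "real ^ 'n ^ 'm" and x y :: "real ^ 'n"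
  assumes A: "\<And>i k. A $ i $ k > 0" and x: "\<forall>k. x $ k > 0" and y: "\<forall>k. y $ k > 0"
  defines "p \<equiv> sqrt (distortion A)" and "s \<equiv> sqrt (Dist x y)"
  shows "Dist (A *v x) (A *v y) \<le> ((1 + p * s) / (p + s))\<^sup>2"
proof (rule Dist_le)
  fix i j :: 'm
  have p: "p \<ge> 1" and p2: "p\<^sup>2 = distortion A"
    using distortion_ge_1[OF A] by (simp_all add: p_def)
  have s: "s \<ge> 1" and s2: "s\<^sup>2 = Dist x y"
    using Dist_ge_1[OF x y] by (simp_all add: s_def)
  define v where "v k = A $ j $ k * x $ k" for k
  define c where "c k = A $ i $ k / A $ j $ k" for k
  define t where "t k = y $ k / x $ k" for k
  obtain k0 where k0: "\<And>k. c k0 \<le> c k" using finite_range_has_min by blast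
  obtain k1 where k1: "\<And>k. t k1 \<le> t k" using finite_range_has_min by blast
  have c_pos: "c k > 0" and t_pos: "t k > 0" and v_pos: "v k > 0" for k
    using A x y by (simp_all add: c_def t_def v_def)
  have c_le: "c k \<le> p\<^sup>2 * c k0" for k
    unfolding c_def p2 by (rule row_ratio_le_distortion[OF A])
  have t_le: "t k \<le> s\<^sup>2 * t k1" for k
    unfolding t_def s2 by (rule coordinate_ratio_le_Dist[OF x y])
  have vct: "v k * c k * t k = A $ i $ k * y $ k" and vt: "v k * t k = A $ j $ k * y $ k"
    and vc: "v k * c k = A $ i $ k * x $ k" for k
    using A[of j k] x[rule_format, of k] by (simp_all add: v_def c_def t_def)
  have "(A *v y) $ i = (\<Sum>k\<in>UNIV. v k * c k * t k)" by (simp add: matrix_vector_mult_def vct)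
  moreover have "(A *v x) $ j = (\<Sum>k\<in>UNIV. v k)" by (simp add: matrix_vector_mult_def v_def)
  moreover have "(A *v y) $ j = (\<Sum>k\<in>UNIV. v k * t k)" by (simp add: matrix_vector_mult_def vt)
  moreover have "(A *v x) $ i = (\<Sum>k\<in>UNIV. v k * c k)" by (simp add: matrix_vector_mult_def vc)
  moreover have "(p + s)\<^sup>2 * ((\<Sum>k\<in>UNIV. v k * c k * t k) * (\<Sum>k\<in>UNIV. v k))
      \<le> (1 + p * s)\<^sup>2 * ((\<Sum>k\<in>UNIV. v k * t k) * (\<Sum>k\<in>UNIV. v k * c k))"
    by (rule weighted_cross_ratio_le[where a="c k0" and b="t k1"])
       (use p s v_pos c_pos t_pos k0 k1 c_le t_le in auto)
  moreover have "(A *v x) $ i > 0" "(A *v y) $ j > 0"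
    using matrix_vector_mult_pos[OF A x] matrix_vector_mult_pos[OF A y] by auto
  ultimately show "((A *v y) $ i * (A *v x) $ j) / ((A *v y) $ j * (A *v x) $ i)
      \<le> ((1 + p * s) / (p + s))\<^sup>2"
    using p s by (simp add: divide_simps mult.commute mult.left_commute add_pos_pos)
qed

lemma hilbert_dist_matrix_vector_mult_le:
  fixes A :: "real ^ 'n ^ 'm" and x y :: "real ^ 'n"
  assumes A: "\<And>i k. A $ i $ k > 0" and x: "\<forall>k. x $ k > 0" and y: "\<forall>k. y $ k > 0"
  shows "hilbert_dist (A *v x) (A *v y) \<le> Theta (sqrt (distortion A)) (hilbert_dist x y)"
proof -
  define p where "p = sqrt (distortion A)"
  define s where "s = sqrt (Dist x y)"
  have p: "p \<ge> 1" unfolding p_def using distortion_ge_1[OF A] by simp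
  have s: "s \<ge> 1" unfolding s_def using Dist_ge_1[OF x y] by simp
  have "hilbert_dist x y / 2 = ln s"
    using Dist_ge_1[OF x y] by (simp add: hilbert_dist_def s_def ln_sqrt)
  then have "exp (hilbert_dist x y / 2) = s" using s by simp
  then have Theta_eq: "Theta p (hilbert_dist x y) = ln (((1 + p * s) / (p + s))\<^sup>2)"
    using p s by (simp add: Theta_def ln_realpow add_pos_pos)
  have "1 \<le> Dist (A *v x) (A *v y)"
    by (rule Dist_ge_1[OF matrix_vector_mult_pos[OF A x] matrix_vector_mult_pos[OF A y]])
  then have "hilbert_dist (A *v x) (A *v y) \<le> ln (((1 + p * s) / (p + s))\<^sup>2)"
    using Dist_matrix_vector_mult_le[OF A x y]
    unfolding hilbert_dist_def by (intro ln_mono) (simp_all add: p_def s_def)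
  also have "\<dots> = Theta p (hilbert_dist x y)" using Theta_eq ..
  finally show ?thesis unfolding p_def .
qed

section \<open>Analytic properties of \<open>\<Theta>\<close>\<close>

definition Theta_deriv :: "real \<Rightarrow> real \<Rightarrow> real" where
  "Theta_deriv p h = (p\<^sup>2 - 1) * exp (h / 2) / ((p + exp (h / 2)) * (1 + p * exp (h / 2)))"

lemma has_real_derivative_Theta:
  assumes p: "p > 0"
  shows "(Theta p has_real_derivative Theta_deriv p h) (at h)"
proof -
  have pos: "1 + p * exp (x / 2) > 0" "p + exp (x / 2) > 0" for x
    using p by (simp_all add: add_pos_pos)
  have "Theta p x = 2 * (ln (1 + p * exp (x / 2)) - ln (p + exp (x / 2)))" for x
    using pos[of x] by (simp add: Theta_def ln_div)
  then have "Theta p = (\<lambda>h. 2 * (ln (1 + p * exp (h / 2)) - ln (p + exp (h / 2))))" by blast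
  moreover have "((\<lambda>h. 2 * (ln (1 + p * exp (h / 2)) - ln (p + exp (h / 2)))) has_real_derivative
      p * exp (h / 2) / (1 + p * exp (h / 2)) - exp (h / 2) / (p + exp (h / 2))) (at h)"
    using pos[of h] by (auto intro!: derivative_eq_intros simp: divide_simps) (simp add: algebra_simps)
  moreover have
    "p * exp (h / 2) / (1 + p * exp (h / 2)) - exp (h / 2) / (p + exp (h / 2)) = Theta_deriv p h"
    using pos[of h] unfolding Theta_deriv_def
    by (simp add: divide_simps power2_eq_square) (simp add: algebra_simps)
  ultimately show ?thesis by simp
qed

lemma Theta_0 [simp]: "Theta p 0 = 0"
  by (simp add: Theta_def add.commute)

lemma Theta_deriv_0: "Theta_deriv p 0 = (p - 1) / (p + 1)"
proof (cases "p = -1")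
  case False
  have "p\<^sup>2 - 1 = (p - 1) * (p + 1)" by (simp add: power2_eq_square algebra_simps)
  then show ?thesis using False by (simp add: Theta_deriv_def add.commute[of 1 p])
qed (simp add: Theta_deriv_def)

lemma Theta_deriv_antimono:
  assumes p: "p \<ge> 1" and "0 \<le> x" and "x \<le> y"
  shows "Theta_deriv p y \<le> Theta_deriv p x"
proof -
  define e1 where "e1 = exp (x / 2)"
  define e2 where "e2 = exp (y / 2)"
  have e1: "e1 \<ge> 1" and e12: "e1 \<le> e2" using assms by (simp_all add: e1_def e2_def)
  have "e1 * ((p + e2) * (1 + p * e2)) - e2 * ((p + e1) * (1 + p * e1))
      = p * (e2 - e1) * (e1 * e2 - 1)"
    by (simp add: algebra_simps)
  also have "\<dots> \<ge> 0" using p e1 e12 mult_mono[of 1 e1 1 e2] by simp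
  finally have "e2 / ((p + e2) * (1 + p * e2)) \<le> e1 / ((p + e1) * (1 + p * e1))"
    using p e1 e12 by (simp add: divide_simps add_pos_pos)
  then have "(p\<^sup>2 - 1) * (e2 / ((p + e2) * (1 + p * e2)))
      \<le> (p\<^sup>2 - 1) * (e1 / ((p + e1) * (1 + p * e1)))"
    using p by (intro mult_left_mono) simp_all
  then show ?thesis unfolding Theta_deriv_def e1_def e2_def by simp
qed

lemma Theta_strict_mono:
  assumes p: "p > 1"
  shows "strict_mono_on {0..} (Theta p)"
proof (rule strict_mono_onI)
  fix x y :: real assume "x < y"
  define e1 where "e1 = exp (x / 2)"
  define e2 where "e2 = exp (y / 2)"
  have e: "e1 > 0" "e1 < e2" unfolding e1_def e2_def using \<open>x < y\<close> by simp_all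
  have "(1 + p * e2) * (p + e1) - (1 + p * e1) * (p + e2) = (p\<^sup>2 - 1) * (e2 - e1)"
    by (simp add: algebra_simps power2_eq_square)
  also have "\<dots> > 0" using p e one_less_power[OF p, of 2] by simp
  finally have "(1 + p * e1) / (p + e1) < (1 + p * e2) / (p + e2)"
    using e p by (simp add: divide_simps add_pos_pos)
  moreover have "(1 + p * e1) / (p + e1) > 0" using e p by (simp add: add_pos_pos)
  ultimately show "Theta p x < Theta p y" unfolding Theta_def e1_def e2_def by simp
qed

lemma Theta_concave:
  assumes p: "p \<ge> 1"
  shows "concave_on {0..} (Theta p)"
  unfolding concave_on_def
proof (rule convex_on_realI[where f' = "\<lambda>h. - Theta_deriv p h"])
  fix x :: real assume "x \<in> {0..}"
  show "((\<lambda>x. - Theta p x) has_real_derivative - Theta_deriv p x) (at x)"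
    using has_real_derivative_Theta[of p x] p by (auto intro!: derivative_eq_intros)
next
  fix x y :: real assume "x \<in> {0..}" "y \<in> {0..}" "x \<le> y"
  then show "- Theta_deriv p x \<le> - Theta_deriv p y" using Theta_deriv_antimono[OF p] by simp
qed simp

lemma Theta_le_linear:
  assumes p: "p \<ge> 1" and h: "h \<ge> 0"
  shows "Theta p h \<le> (p - 1) / (p + 1) * h"
proof -
  define k where "k = (p - 1) / (p + 1)"
  have "Theta p h - k * h \<le> Theta p 0 - k * 0"
  proof (rule deriv_nonpos_imp_antimono[where g = "\<lambda>x. Theta p x - k * x"
        and g' = "\<lambda>x. Theta_deriv p x - k"])
    fix x assume "x \<in> {0..h}"
    show "((\<lambda>x. Theta p x - k * x) has_real_derivative Theta_deriv p x - k) (at x)"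
      using has_real_derivative_Theta[of p x] p by (auto intro!: derivative_eq_intros)
    show "Theta_deriv p x - k \<le> 0"
      using Theta_deriv_antimono[OF p, of 0 x] \<open>x \<in> {0..h}\<close> by (simp add: k_def Theta_deriv_0)
  qed (use h in simp)
  then show ?thesis by (simp add: k_def)
qed

lemma Theta_tendsto:
  assumes "p > 0"
  shows "(Theta p \<longlongrightarrow> 2 * ln p) at_top"
  unfolding Theta_def[abs_def] using assms by real_asymp

theorem mainTheorem12:
  fixes A :: "real ^ 'n ^ 'n"
  assumes n2: "CARD('n) \<ge> 2"
    and pos: "\<And>i k. A $ i $ k > 0"
  defines "p \<equiv> sqrt (distortion A)"
  shows "(\<forall>x y :: real ^ 'n. (\<forall>i. x $ i > 0) \<and> (\<forall>i. y $ i > 0) \<longrightarrow>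
            hilbert_dist (A *v x) (A *v y) \<le> Theta p (hilbert_dist x y))
    \<and> (p > 1 \<longrightarrow>
          strict_mono_on {0..} (Theta p)
        \<and> concave_on {0..} (Theta p)
        \<and> Theta p 0 = 0
        \<and> (Theta p has_real_derivative kappa A) (at 0 within {0..})
        \<and> (Theta p \<longlongrightarrow> ln (distortion A)) at_top
        \<and> (\<forall>h\<ge>0. Theta p h \<le> kappa A * h)
        \<and> (\<forall>x y :: real ^ 'n. (\<forall>i. x $ i > 0) \<and> (\<forall>i. y $ i > 0) \<longrightarrow>
            hilbert_dist (A *v x) (A *v y) \<le> kappa A * hilbert_dist x y))"
proof (intro conjI impI allI)
  have kappa: "kappa A = Theta_deriv p 0" unfolding kappa_def p_def Theta_deriv_0 ..
  have ln_R: "ln (distortion A) = 2 * ln p"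
    using distortion_ge_1[OF pos] by (simp add: p_def ln_sqrt)
  show contraction: "hilbert_dist (A *v x) (A *v y) \<le> Theta p (hilbert_dist x y)"
    if "(\<forall>i. x $ i > 0) \<and> (\<forall>i. y $ i > 0)" for x y :: "real ^ 'n"
    using hilbert_dist_matrix_vector_mult_le[OF pos] that unfolding p_def by blast
  assume p: "p > 1"
  show "strict_mono_on {0..} (Theta p)" using Theta_strict_mono[OF p] .
  show "concave_on {0..} (Theta p)" using Theta_concave p by simp
  show "Theta p 0 = 0" by simp
  show "(Theta p has_real_derivative kappa A) (at 0 within {0..})"
    using has_real_derivative_Theta[of p 0] p unfolding kappa
    by (simp add: has_field_derivative_at_within)
  show "(Theta p \<longlongrightarrow> ln (distortion A)) at_top"
    using Theta_tendsto[of p] p unfolding ln_R by simp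
  show linear: "Theta p h \<le> kappa A * h" if "h \<ge> 0" for h
    using Theta_le_linear[of p h] p that unfolding kappa Theta_deriv_0 by simp
  show "hilbert_dist (A *v x) (A *v y) \<le> kappa A * hilbert_dist x y"
    if "(\<forall>i. x $ i > 0) \<and> (\<forall>i. y $ i > 0)" for x y :: "real ^ 'n"
  proof -
    have "hilbert_dist x y \<ge> 0" using that by (simp add: hilbert_dist_nonneg)
    then show ?thesis using contraction[OF that] linear by (meson order_trans)
  qed
qed

end
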